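(* Let $n$ and $a$ be coprime positive integers. For every integer $k$ define $\pi_k\in S(\mathbb{Z}_n)$ by $\pi_k(x)=ax+k$. Then $\mathrm{cyc}(\pi_k)\leq\mathrm{cyc}(\pi_0)$ for every integer $k$.
   Context: $S(\mathbb{Z}_n)$ is the set of bijections $\mathbb{Z}_n\to\mathbb{Z}_n$; $\mathrm{cyc}(\pi)$ is the number of cycles (including fixed points) in the cycle decomposition of $\pi$. *)

theory Defs
  imports "HOL-Combinatorics.Orbits"
begin

definition cyc :: "'a set \<Rightarrow> ('a \<Rightarrow> 'a) \<Rightarrow> nat" where
  "cyc S f = card ((\<lambda>x. orbit f x) ` S)"

text \<open>The affine map x \<mapsto> a x + k on Z_n, with Z_n represented as {0..<n} of int.\<close>
definition aff_map :: "int \<Rightarrow> int \<Rightarrow> int \<Rightarrow> int \<Rightarrow> int" where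
  "aff_map n a k x = (a * x + k) mod n"

end

theory Submission
  imports Defs "HOL-Combinatorics.Cycles"
begin

text \<open>
  Averaging the number of fixed points of the powers g^0, ..., g^(N-1) of a permutation g over
  a common period N counts its cycles (the cyclic case of Burnside's lemma). If x0 is a fixed
  point of the j-th power of pi_k, which is the affine map x \<mapsto> a^j x + c, then y \<mapsto> y - x0
  sends its fixed points injectively to fixed points of the j-th power of pi_0 = (x \<mapsto> a x).
  So every power of pi_k has at most as many fixed points as the same power of pi_0.
\<close>

lemma card_orbit_eq_least_power:
  assumes "permutation g"
  shows "card (orbit g x) = least_power g x"
proof -
  have "orbit g x = set (support g x)"
    using orbit_altdef_permutation[OF assms] support_set[OF assms] by auto
  moreover have "distinct (support g x)"
    using cycle_of_permutation[OF assms] by simp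
  ultimately show ?thesis
    using distinct_card[of "support g x"] by simp
qed

lemma card_multiples_lessThan:
  fixes d N :: nat
  assumes "d dvd N" "d > 0"
  shows "card {j \<in> {..<N}. d dvd j} = N div d"
proof -
  obtain M where N: "N = d * M"
    using assms(1) by (rule dvdE)
  have "{j \<in> {..<N}. d dvd j} = (\<lambda>i. d * i) ` {..<M}"
    using assms(2) by (auto simp: N)
  moreover have "inj_on (\<lambda>i. d * i) {..<M}"
    using assms(2) by (auto simp: inj_on_def)
  ultimately show ?thesis
    using assms(2) by (simp add: N card_image)
qed

lemma card_funpow_fixes_lessThan:
  assumes "permutation g" "card (orbit g x) dvd N"
  shows "card {j \<in> {..<N}. (g ^^ j) x = x} = N div card (orbit g x)"
proof -
  have "{j \<in> {..<N}. (g ^^ j) x = x} = {j \<in> {..<N}. card (orbit g x) dvd j}"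
    using least_power_dvd[OF assms(1)] by (simp add: card_orbit_eq_least_power[OF assms(1)])
  then show ?thesis
    using card_multiples_lessThan assms least_power_of_permutation(2)[OF assms(1)]
    by (simp add: card_orbit_eq_least_power)
qed

lemma sum_card_fixpoints_funpow_permutes:
  assumes g: "g permutes S" and "finite S" and period: "\<forall>x\<in>S. (g ^^ N) x = x"
  shows "(\<Sum>j<N. card {x \<in> S. (g ^^ j) x = x}) = N * cyc S g"
proof -
  have perm: "permutation g"
    using assms permutation_permutes by blast
  have orbit_dvd: "card (orbit g x) dvd N" if "x \<in> S" for x
    using least_power_dvd[OF perm] period that by (simp add: card_orbit_eq_least_power[OF perm])
  have orbit_sum: "(\<Sum>y\<in>{y \<in> S. orbit g y = C}. N div card (orbit g y)) = N"
    if "C \<in> (\<lambda>x. orbit g x) ` S" for C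
  proof -
    obtain x where x: "x \<in> S" "C = orbit g x"
      using \<open>C \<in> (\<lambda>x. orbit g x) ` S\<close> by blast
    have cyclic: "cyclic_on g C"
      unfolding x(2) by (rule cyclic_on_orbit'[OF perm])
    have "C \<subseteq> S"
      unfolding x(2) by (rule permutes_orbit_subset[OF g x(1)])
    then have "{y \<in> S. orbit g y = C} = C"
      using orbit_cyclic_eq3[OF cyclic] permutation_self_in_orbit[OF perm] by auto
    then have "(\<Sum>y\<in>{y \<in> S. orbit g y = C}. N div card (orbit g y)) = card C * (N div card C)"
      using orbit_cyclic_eq3[OF cyclic] by simp
    also have "\<dots> = N"
      using orbit_dvd[OF x(1)] x(2) by simp
    finally show ?thesis .
  qed
  have "(\<Sum>j<N. card {x \<in> S. (g ^^ j) x = x}) = (\<Sum>j<N. \<Sum>x\<in>S. if (g ^^ j) x = x then 1 else 0)"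
    using \<open>finite S\<close> by (simp add: sum.inter_filter[symmetric])
  also have "\<dots> = (\<Sum>x\<in>S. card {j \<in> {..<N}. (g ^^ j) x = x})"
    by (subst sum.swap) (simp add: sum.inter_filter[symmetric])
  also have "\<dots> = (\<Sum>x\<in>S. N div card (orbit g x))"
    using card_funpow_fixes_lessThan[OF perm orbit_dvd] by simp
  also have "\<dots> = (\<Sum>C\<in>(\<lambda>x. orbit g x) ` S. \<Sum>y\<in>{y \<in> S. orbit g y = C}. N div card (orbit g y))"
    by (rule sum.group[symmetric]) (use \<open>finite S\<close> in auto)
  also have "\<dots> = (\<Sum>C\<in>(\<lambda>x. orbit g x) ` S. N)"
    using orbit_sum by simp
  finally show ?thesis
    by (simp add: cyc_def)
qed

lemma permutes_perm_restrict:
  assumes "bij_betw f S S"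
  shows "perm_restrict f S permutes S"
proof (rule bij_imp_permutes)
  show "bij_betw (perm_restrict f S) S S"
    using assms by (rule bij_betw_cong[THEN iffD1, rotated]) (simp add: perm_restrict_simps)
qed (simp add: perm_restrict_simps)

lemma funpow_perm_restrict:
  assumes "f ` S \<subseteq> S" "x \<in> S"
  shows "(perm_restrict f S ^^ j) x = (f ^^ j) x"
proof -
  have "(perm_restrict f S ^^ j) x = (f ^^ j) x \<and> (f ^^ j) x \<in> S"
    by (induction j) (use assms in \<open>auto simp: perm_restrict_simps\<close>)
  then show ?thesis ..
qed

lemma cyc_perm_restrict:
  assumes "f ` S \<subseteq> S"
  shows "cyc S (perm_restrict f S) = cyc S f"
proof -
  have "orbit (perm_restrict f S) x = orbit f x" if "x \<in> S" for x
    using that assms by (intro orbit_cong0) (auto simp: perm_restrict_simps)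
  then show ?thesis
    unfolding cyc_def by (simp cong: image_cong)
qed

lemma funpow_fact_card_fixes:
  assumes "bij_betw f S S" "finite S" "x \<in> S"
  shows "(f ^^ fact (card S)) x = x"
proof -
  let ?g = "perm_restrict f S"
  have g: "?g permutes S"
    by (rule permutes_perm_restrict[OF assms(1)])
  then have perm: "permutation ?g"
    using assms(2) permutation_permutes by blast
  have "card (orbit ?g x) \<le> card S"
    using permutes_orbit_subset[OF g assms(3)] assms(2) by (simp add: card_mono)
  moreover have "card (orbit ?g x) > 0"
    using least_power_of_permutation(2)[OF perm] by (simp add: card_orbit_eq_least_power[OF perm])
  ultimately have "card (orbit ?g x) dvd fact (card S)"
    by (simp add: dvd_fact)
  then have "(?g ^^ fact (card S)) x = x"
    using least_power_dvd[OF perm] by (simp add: card_orbit_eq_least_power[OF perm])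
  then show ?thesis
    using assms by (simp add: funpow_perm_restrict bij_betw_def)
qed

lemma sum_card_fixpoints_funpow:
  assumes f: "bij_betw f S S" and "finite S" and period: "\<forall>x\<in>S. (f ^^ N) x = x"
  shows "(\<Sum>j<N. card {x \<in> S. (f ^^ j) x = x}) = N * cyc S f"
proof -
  let ?g = "perm_restrict f S"
  have maps: "f ` S \<subseteq> S"
    using f by (simp add: bij_betw_def)
  have "{x \<in> S. (f ^^ j) x = x} = {x \<in> S. (?g ^^ j) x = x}" for j
    using funpow_perm_restrict[OF maps] by auto
  then have "(\<Sum>j<N. card {x \<in> S. (f ^^ j) x = x}) = (\<Sum>j<N. card {x \<in> S. (?g ^^ j) x = x})"
    by simp
  also have "\<dots> = N * cyc S ?g"
    using \<open>finite S\<close> period funpow_perm_restrict[OF maps]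
    by (intro sum_card_fixpoints_funpow_permutes permutes_perm_restrict[OF f]) auto
  also have "\<dots> = N * cyc S f"
    by (simp add: cyc_perm_restrict[OF maps])
  finally show ?thesis .
qed

lemma bij_betw_aff_map:
  fixes n a k :: int
  assumes "n > 0" "coprime a n"
  shows "bij_betw (aff_map n a k) {0..<n} {0..<n}"
proof -
  have maps: "aff_map n a k ` {0..<n} \<subseteq> {0..<n}"
    using assms(1) by (auto simp: aff_map_def)
  have "inj_on (aff_map n a k) {0..<n}"
  proof (rule inj_onI)
    fix x y
    assume x: "x \<in> {0..<n}" and y: "y \<in> {0..<n}" and "aff_map n a k x = aff_map n a k y"
    then have "n dvd a * (x - y)"
      by (simp add: aff_map_def mod_eq_dvd_iff algebra_simps)
    then have "n dvd x - y"
      using assms(2) by (simp add: coprime_commute coprime_dvd_mult_right_iff)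
    then have "x mod n = y mod n"
      by (simp add: mod_eq_dvd_iff)
    then show "x = y"
      using x y by simp
  qed
  then show ?thesis
    using maps endo_inj_surj[of "{0..<n}"] by (simp add: bij_betw_def)
qed

lemma funpow_aff_map_zero:
  fixes n a z :: int
  assumes "0 \<le> z" "z < n"
  shows "(aff_map n a 0 ^^ j) z = (a ^ j * z) mod n"
  using assms by (induction j) (simp_all add: aff_map_def mod_mult_right_eq mult.assoc)

lemma funpow_aff_map_diff_mod:
  fixes n a k x y :: int
  shows "((aff_map n a k ^^ j) y - (aff_map n a k ^^ j) x) mod n = (a ^ j * (y - x)) mod n"
proof (induction j)
  case (Suc j)
  define u v where "u = (aff_map n a k ^^ j) y" and "v = (aff_map n a k ^^ j) x"
  have "((aff_map n a k ^^ Suc j) y - (aff_map n a k ^^ Suc j) x) mod n = (a * (u - v)) mod n"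
    by (simp add: u_def v_def aff_map_def mod_diff_eq algebra_simps)
  also have "\<dots> = (a * ((u - v) mod n)) mod n"
    by (simp add: mod_mult_right_eq)
  also have "\<dots> = (a ^ Suc j * (y - x)) mod n"
    using Suc by (simp add: u_def v_def mod_mult_right_eq mult.assoc)
  finally show ?case .
qed simp

lemma card_fixpoints_funpow_aff_map_le:
  fixes n a k :: int
  assumes "n > 0"
  shows "card {x \<in> {0..<n}. (aff_map n a k ^^ j) x = x}
    \<le> card {x \<in> {0..<n}. (aff_map n a 0 ^^ j) x = x}" (is "card ?Fk \<le> card ?F0")
proof (cases "?Fk = {}")
  case False
  then obtain x0 where x0: "x0 \<in> ?Fk"
    by blast
  let ?shift = "\<lambda>y. (y - x0) mod n"
  have "inj_on ?shift ?Fk"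
  proof (rule inj_onI)
    fix y y'
    assume "y \<in> ?Fk" "y' \<in> ?Fk" "?shift y = ?shift y'"
    then show "y = y'"
      by (simp add: mod_eq_dvd_iff flip: mod_eq_dvd_iff[of y n y'])
  qed
  moreover have "?shift ` ?Fk \<subseteq> ?F0"
  proof
    fix z
    assume "z \<in> ?shift ` ?Fk"
    then obtain y where y: "y \<in> ?Fk" and z: "z = ?shift y"
      by blast
    have range: "0 \<le> z" "z < n"
      using z assms by simp_all
    have "(aff_map n a 0 ^^ j) z = (a ^ j * (y - x0)) mod n"
      using range by (simp add: funpow_aff_map_zero z mod_mult_right_eq)
    also have "\<dots> = ((aff_map n a k ^^ j) y - (aff_map n a k ^^ j) x0) mod n"
      by (rule funpow_aff_map_diff_mod[symmetric])
    also have "\<dots> = z"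
      using y x0 z by simp
    finally show "z \<in> ?F0"
      using range by simp
  qed
  moreover have "finite ?F0"
    by (rule finite_subset[of _ "{0..<n}"]) auto
  ultimately show ?thesis
    by (rule card_inj_on_le)
qed (simp only: card.empty le0)

theorem lemma3p2:
  fixes n a k :: int
  assumes "n > 0" and "a > 0" and "coprime a n"
  shows "cyc {0..<n} (aff_map n a k) \<le> cyc {0..<n} (aff_map n a 0)"
proof -
  let ?S = "{0..<n}"
  define N :: nat where "N = fact (card ?S)"
  have bij: "bij_betw (aff_map n a c) ?S ?S" for c
    using bij_betw_aff_map assms(1,3) .
  have period: "\<forall>x\<in>?S. (aff_map n a c ^^ N) x = x" for c
    unfolding N_def using funpow_fact_card_fixes[OF bij] by simp
  have "N * cyc ?S (aff_map n a k) = (\<Sum>j<N. card {x \<in> ?S. (aff_map n a k ^^ j) x = x})"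
    using sum_card_fixpoints_funpow[OF bij _ period] by simp
  also have "\<dots> \<le> (\<Sum>j<N. card {x \<in> ?S. (aff_map n a 0 ^^ j) x = x})"
    by (intro sum_mono card_fixpoints_funpow_aff_map_le assms(1))
  also have "\<dots> = N * cyc ?S (aff_map n a 0)"
    using sum_card_fixpoints_funpow[OF bij _ period] by simp
  finally show ?thesis
    unfolding N_def by simp
qed

end
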